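(* Let $\psi(u,v)$ be a $C^2$ function on $\mathbb R^2$ and $g(x)=\psi(|x|^2,|x|_{-1}^2)$ for $x\in\mathbb R^N$. Then for every $\varepsilon>0$ and $x\in\mathbb R^N$, $$\widetilde{\mathcal L}^\varepsilon g(x)=\widetilde Lg(x)=2a\Big(\sum_\ell\lambda_\ell(1+\delta_\ell)x_\ell^2\,\partial_u^2\psi+2\sum_\ell(1+\delta_\ell)x_\ell^2\,\partial_u\partial_v\psi+\sum_\ell\tfrac1{\lambda_\ell}(1+\delta_\ell)x_\ell^2\,\partial_v^2\psi\Big)+\Big(a\sum_\ell\lambda_\ell(1+\delta_\ell)-2\sum_\ell\lambda_\ell x_\ell^2\Big)\partial_u\psi+\Big(a\sum_\ell(1+\delta_\ell)-2\sum_\ell x_\ell^2\Big)\partial_v\psi,$$ with derivatives of $\psi$ evaluated at $(u,v)=(|x|^2,|x|_{-1}^2)$. Moreover, if $g_0(x)=\exp\{|x|_{-1}^2/(2a)\}$, then for every $\varepsilon>0$ and $x\in\mathbb R^N$, $$\widetilde{\mathcal L}^\varepsilon g_0(x)\le-\frac{aN-|x|^2}{2a}\,e^{|x|_{-1}^2/2a}\le\frac N2e^{N/2}.$$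
   Context: Let $n\ge4$, $N=2n$, $1=\lambda_1=\lambda_2<\lambda_3=\lambda_4<\dots<\lambda_{N-1}=\lambda_N$. On $\mathbb R^N$: $\langle x,y\rangle=\sum x_\ell y_\ell$, $|x|^2=\sum x_\ell^2$, $\langle x,y\rangle_{-1}=\sum x_\ell y_\ell/\lambda_\ell$, $|x|_{-1}^2=\sum x_\ell^2/\lambda_\ell$. Fix $a>0$, $\delta_\ell\in(-1,0]$ with $\delta_{2i}=\delta_{2i-1}$, and $\widetilde L=\sum_\ell\lambda_\ell(\tfrac a2(1+\delta_\ell)\partial_\ell^2-x_\ell\partial_\ell)$. Let $b$ be a vector field on $\mathbb R^N$ with each $b(x)_\ell$ a quadratic form in $x$, $\operatorname{div}b=0$, $\langle x,b(x)\rangle=0=\langle x,b(x)\rangle_{-1}$ for all $x$; $B=\sum b(x)_\ell\partial_\ell$. With $\mathcal J$ the set of triples $J=(k,\ell,m)$ in $\{1,\dots,N\}$ with $\lambda_k<\lambda_\ell<\lambda_m$, let $T_J=\sum x_ax_b(1/\lambda_a-1/\lambda_b)\partial_c$ (sum over the three cyclic permutations $(a,b,c)$ of $J$), and $R_i=x_{2i}\partial_{2i-1}-x_{2i-1}\partial_{2i}$, $1\le i\le n$; enumerate these vector fields as $Z_1,\dots,Z_M$ and set $\mathcal D=\frac12\sum_mZ_m^2$. Fix $\kappa\in(0,1]$, and for $\varepsilon>0$ set $\widetilde{\mathcal L}^\varepsilon=\widetilde L+\varepsilon^{-1}(B+\kappa\mathcal D)$. *)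

theory Defs
  imports "HOL-Analysis.Analysis"
begin

text \<open>Points of R^N are represented as functions nat => real; only the
coordinates 1..N matter.  Vector fields are maps (component index) => point => real.\<close>

type_synonym pt = "nat \<Rightarrow> real"
type_synonym vfield = "nat \<Rightarrow> pt \<Rightarrow> real"

definition pd :: "nat \<Rightarrow> (pt \<Rightarrow> real) \<Rightarrow> pt \<Rightarrow> real" where
  "pd l f x = deriv (\<lambda>t. f (x(l := t))) (x l)"

definition sqn :: "nat \<Rightarrow> pt \<Rightarrow> real" where
  "sqn N x = (\<Sum>l\<in>{1..N}. (x l)\<^sup>2)"

definition sqnm1 :: "nat \<Rightarrow> (nat \<Rightarrow> real) \<Rightarrow> pt \<Rightarrow> real" where
  "sqnm1 N lam x = (\<Sum>l\<in>{1..N}. (x l)\<^sup>2 / lam l)"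

definition vf_apply :: "nat \<Rightarrow> vfield \<Rightarrow> (pt \<Rightarrow> real) \<Rightarrow> pt \<Rightarrow> real" where
  "vf_apply N Z f x = (\<Sum>c\<in>{1..N}. Z c x * pd c f x)"

definition Ltil :: "nat \<Rightarrow> (nat \<Rightarrow> real) \<Rightarrow> real \<Rightarrow> (nat \<Rightarrow> real) \<Rightarrow> (pt \<Rightarrow> real) \<Rightarrow> pt \<Rightarrow> real" where
  "Ltil N lam a delta f x =
     (\<Sum>l\<in>{1..N}. lam l * (a / 2 * (1 + delta l) * pd l (pd l f) x - x l * pd l f x))"

definition Tfield :: "(nat \<Rightarrow> real) \<Rightarrow> nat \<Rightarrow> nat \<Rightarrow> nat \<Rightarrow> vfield" where
  "Tfield lam k l m = (\<lambda>c x.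
      (if c = m then x k * x l * (1 / lam k - 1 / lam l) else 0)
    + (if c = k then x l * x m * (1 / lam l - 1 / lam m) else 0)
    + (if c = l then x m * x k * (1 / lam m - 1 / lam k) else 0))"

definition Rfield :: "nat \<Rightarrow> vfield" where
  "Rfield i = (\<lambda>c x. (if c = 2 * i - 1 then x (2 * i) else 0)
                    - (if c = 2 * i then x (2 * i - 1) else 0))"

definition Jset :: "nat \<Rightarrow> (nat \<Rightarrow> real) \<Rightarrow> (nat \<times> nat \<times> nat) set" where
  "Jset N lam = {(k, l, m). k \<in> {1..N} \<and> l \<in> {1..N} \<and> m \<in> {1..N} \<and> lam k < lam l \<and> lam l < lam m}"

definition Dop :: "nat \<Rightarrow> (nat \<Rightarrow> real) \<Rightarrow> (pt \<Rightarrow> real) \<Rightarrow> pt \<Rightarrow> real" where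
  "Dop n lam f x = 1 / 2 *
     ((\<Sum>(k, l, m)\<in>Jset (2 * n) lam.
          vf_apply (2 * n) (Tfield lam k l m) (vf_apply (2 * n) (Tfield lam k l m) f) x)
    + (\<Sum>i\<in>{1..n}. vf_apply (2 * n) (Rfield i) (vf_apply (2 * n) (Rfield i) f) x))"

definition Leps :: "nat \<Rightarrow> (nat \<Rightarrow> real) \<Rightarrow> real \<Rightarrow> (nat \<Rightarrow> real) \<Rightarrow> vfield \<Rightarrow> real \<Rightarrow> real
                     \<Rightarrow> (pt \<Rightarrow> real) \<Rightarrow> pt \<Rightarrow> real" where
  "Leps n lam a delta b kappa eps f x =
     Ltil (2 * n) lam a delta f x + (1 / eps) * (vf_apply (2 * n) b f x + kappa * Dop n lam f x)"

end

theory Submission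
  imports Defs
begin

(* A function g(x) = \<psi>(|x|\<^sup>2, |x|\<^sup>2\<^sub>-\<^sub>1) has gradient 2(\<partial>\<^sub>u\<psi>) x + 2(\<partial>\<^sub>v\<psi>) \<Lambda>\<^sup>-\<^sup>1x, so it is
  annihilated by every vector field tangent to the level sets of both squared norms. The fields
  T\<^sub>J are, the R\<^sub>i are because \<lambda>\<^sub>2\<^sub>i\<^sub>-\<^sub>1 = \<lambda>\<^sub>2\<^sub>i, and b is by hypothesis; hence B and D vanish on g
  and only the diffusion part remains, which the chain rule evaluates once the mixed partials of
  \<psi> are known to agree (Schwarz). For g\<^sub>0 only the \<partial>\<^sub>v terms survive, and \<lambda>\<^sub>l \<ge> 1, \<delta>\<^sub>l \<le> 0 give
  both bounds. *)

definition has_gradient ::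
    "(real \<times> real \<Rightarrow> real) \<Rightarrow> (real \<times> real \<Rightarrow> real) \<Rightarrow> (real \<times> real \<Rightarrow> real) \<Rightarrow> bool" where
  "has_gradient F Fu Fv \<longleftrightarrow> (\<forall>p. (F has_derivative (\<lambda>(h, k). Fu p * h + Fv p * k)) (at p))"

lemma has_gradient_chain:
  assumes F: "has_gradient F Fu Fv"
    and u: "(u has_real_derivative u') (at t)" and v: "(v has_real_derivative v') (at t)"
  shows "((\<lambda>t. F (u t, v t)) has_real_derivative Fu (u t, v t) * u' + Fv (u t, v t) * v') (at t)"
proof -
  have uv: "((\<lambda>t. (u t, v t)) has_derivative (\<lambda>h. (u' * h, v' * h))) (at t)"
    using has_derivative_Pair[OF u[unfolded has_field_derivative_def] v[unfolded has_field_derivative_def]] .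
  have "((\<lambda>t. F (u t, v t)) has_derivative (\<lambda>h. Fu (u t, v t) * (u' * h) + Fv (u t, v t) * (v' * h))) (at t)"
    using has_derivative_compose[OF uv F[unfolded has_gradient_def, rule_format, of "(u t, v t)"]] by simp
  then show ?thesis unfolding has_field_derivative_def
    by (rule has_derivative_eq_rhs) (auto simp: algebra_simps)
qed

lemma has_gradient_swap:
  assumes "has_gradient F Fu Fv"
  shows "has_gradient (\<lambda>(u, v). F (v, u)) (\<lambda>(u, v). Fv (v, u)) (\<lambda>(u, v). Fu (v, u))"
  unfolding has_gradient_def
proof
  fix p :: "real \<times> real"
  obtain u v where p: "p = (u, v)" by fastforce
  have "((\<lambda>q. (snd q, fst q)) has_derivative (\<lambda>q. (snd q, fst q))) (at p)"
    by (auto intro!: derivative_eq_intros)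
  from has_derivative_compose[OF this assms[unfolded has_gradient_def, rule_format, of "(snd p, fst p)"]]
  show "((\<lambda>(u, v). F (v, u)) has_derivative
          (\<lambda>(h, k). (\<lambda>(u, v). Fv (v, u)) p * h + (\<lambda>(u, v). Fu (v, u)) p * k)) (at p)"
    by (simp add: p case_prod_beta' add.commute)
qed

lemma mixed_difference_mvt:
  assumes F: "has_gradient F Fu Fv" and Fu: "has_gradient Fu Fuu Fuv" and h: "h > 0"
  shows "\<exists>z w. \<bar>z - p1\<bar> < h \<and> \<bar>w - p2\<bar> < h \<and>
           F (p1 + h, p2 + h) - F (p1 + h, p2) - F (p1, p2 + h) + F (p1, p2) = h\<^sup>2 * Fuv (z, w)"
proof -
  have dF: "((\<lambda>s. F (s, c)) has_real_derivative Fu (s, c)) (at s)" for s c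
    using has_gradient_chain[OF F, of "\<lambda>s. s" 1 s "\<lambda>_. c" 0] by (auto intro!: derivative_eq_intros)
  have dFu: "((\<lambda>s. Fu (c, s)) has_real_derivative Fuv (c, s)) (at s)" for s c
    using has_gradient_chain[OF Fu, of "\<lambda>_. c" 0 s "\<lambda>s. s" 1] by (auto intro!: derivative_eq_intros)
  obtain z where z: "p1 < z" "z < p1 + h" and
    zeq: "(F (p1 + h, p2 + h) - F (p1 + h, p2)) - (F (p1, p2 + h) - F (p1, p2))
            = h * (Fu (z, p2 + h) - Fu (z, p2))"
    using MVT2[of p1 "p1 + h" "\<lambda>s. F (s, p2 + h) - F (s, p2)" "\<lambda>s. Fu (s, p2 + h) - Fu (s, p2)"] h
      DERIV_diff[OF dF dF] by auto
  obtain w where w: "p2 < w" "w < p2 + h" and weq: "Fu (z, p2 + h) - Fu (z, p2) = h * Fuv (z, w)"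
    using MVT2[of p2 "p2 + h" "\<lambda>s. Fu (z, s)" "\<lambda>s. Fuv (z, s)"] h dFu by auto
  have "\<bar>z - p1\<bar> < h" "\<bar>w - p2\<bar> < h" using z w by auto
  moreover have "F (p1 + h, p2 + h) - F (p1 + h, p2) - F (p1, p2 + h) + F (p1, p2) = h\<^sup>2 * Fuv (z, w)"
    using zeq weq by (simp add: power2_eq_square)
  ultimately show ?thesis by blast
qed

lemma has_gradient_mixed_partials_eq:
  assumes F: "has_gradient F Fu Fv" and Fu: "has_gradient Fu Fuu Fuv" and Fv: "has_gradient Fv Fvu Fvv"
    and cont_uv: "continuous_on UNIV Fuv" and cont_vu: "continuous_on UNIV Fvu"
  shows "Fuv = Fvu"
proof
  fix p :: "real \<times> real"
  obtain p1 p2 where p: "p = (p1, p2)" by fastforce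
  have near_p: "dist (z, w) p < 2 * h" if "\<bar>z - p1\<bar> < h" "\<bar>w - p2\<bar> < h" for z w h
  proof -
    have "dist (z, w) p \<le> \<bar>z - p1\<bar> + \<bar>w - p2\<bar>"
      using sqrt_sum_squares_le_sum_abs[of "z - p1" "w - p2"] by (simp add: p dist_Pair_Pair dist_real_def)
    with that show ?thesis by linarith
  qed
  show "Fuv p = Fvu p"
  proof (rule ccontr)
    assume "Fuv p \<noteq> Fvu p"
    define e where "e = \<bar>Fuv p - Fvu p\<bar> / 2"
    have "e > 0" using \<open>Fuv p \<noteq> Fvu p\<close> by (simp add: e_def)
    obtain d1 where "d1 > 0" and d1: "\<And>q. dist q p < d1 \<Longrightarrow> \<bar>Fuv q - Fuv p\<bar> < e"
      using cont_uv \<open>e > 0\<close> unfolding continuous_on_iff dist_real_def by blast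
    obtain d2 where "d2 > 0" and d2: "\<And>q. dist q p < d2 \<Longrightarrow> \<bar>Fvu q - Fvu p\<bar> < e"
      using cont_vu \<open>e > 0\<close> unfolding continuous_on_iff dist_real_def by blast
    define h where "h = min d1 d2 / 2"
    have h: "h > 0" using \<open>d1 > 0\<close> \<open>d2 > 0\<close> by (simp add: h_def)
    obtain z w where zw: "\<bar>z - p1\<bar> < h" "\<bar>w - p2\<bar> < h" and
      uv: "F (p1 + h, p2 + h) - F (p1 + h, p2) - F (p1, p2 + h) + F (p1, p2) = h\<^sup>2 * Fuv (z, w)"
      using mixed_difference_mvt[OF F Fu h] by blast
    (* The other order of differentiation is the same argument for the swapped function. *)
    obtain w' z' where zw': "\<bar>w' - p2\<bar> < h" "\<bar>z' - p1\<bar> < h" and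
      vu: "F (p1 + h, p2 + h) - F (p1, p2 + h) - F (p1 + h, p2) + F (p1, p2) = h\<^sup>2 * Fvu (z', w')"
      using mixed_difference_mvt[OF has_gradient_swap[OF F] has_gradient_swap[OF Fv] h, of p2 p1] by auto
    have "Fuv (z, w) = Fvu (z', w')" using uv vu h by (simp add: algebra_simps)
    moreover have "\<bar>Fuv (z, w) - Fuv p\<bar> < e" "\<bar>Fvu (z', w') - Fvu p\<bar> < e"
      using d1 d2 near_p[OF zw] near_p[OF zw'(2,1)] by (auto simp: h_def)
    ultimately show False unfolding e_def by (simp add: abs_if split: if_splits)
  qed
qed

lemma pd_eqI: "((\<lambda>t. f (y(l := t))) has_real_derivative D) (at (y l)) \<Longrightarrow> pd l f y = D"
  unfolding pd_def by (rule DERIV_imp_deriv)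

lemma DERIV_sum_sq_upd:
  assumes "finite A" "l \<in> A"
  shows "((\<lambda>t. \<Sum>j\<in>A. ((y(l := t)) j)\<^sup>2 / c j) has_real_derivative 2 * s / c l) (at s)"
proof -
  have "((\<lambda>t. \<Sum>j\<in>A. ((y(l := t)) j)\<^sup>2 / c j) has_real_derivative
          (\<Sum>j\<in>A. (if j = l then 2 * s else 0) / c j)) (at s)"
    by (intro DERIV_sum DERIV_cdivide) (auto intro!: derivative_eq_intros)
  moreover have "(\<Sum>j\<in>A. (if j = l then 2 * s else 0) / c j) = 2 * s / c l"
    using assms by (simp add: if_distrib[of "\<lambda>x. x / _"] cong: if_cong)
  ultimately show ?thesis by simp
qed

lemma DERIV_sqn_upd: "l \<in> {1..N} \<Longrightarrow> ((\<lambda>t. sqn N (y(l := t))) has_real_derivative 2 * s) (at s)"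
  using DERIV_sum_sq_upd[of "{1..N}" l y "\<lambda>_. 1" s] by (simp add: sqn_def)

lemma DERIV_sqnm1_upd:
  "l \<in> {1..N} \<Longrightarrow> ((\<lambda>t. sqnm1 N lam (y(l := t))) has_real_derivative 2 * s / lam l) (at s)"
  using DERIV_sum_sq_upd[of "{1..N}" l y lam s] by (simp add: sqnm1_def)

lemma DERIV_sq_norms_upd:
  assumes "has_gradient F Fu Fv" "l \<in> {1..N}"
  shows "((\<lambda>t. F (sqn N (y(l := t)), sqnm1 N lam (y(l := t)))) has_real_derivative
           2 * y l * (Fu (sqn N y, sqnm1 N lam y) + Fv (sqn N y, sqnm1 N lam y) / lam l)) (at (y l))"
  using has_gradient_chain[OF assms(1) DERIV_sqn_upd[OF assms(2), where y = y and s = "y l"]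
      DERIV_sqnm1_upd[OF assms(2), where y = y and lam = lam and s = "y l"]]
  by (simp add: algebra_simps)

lemma pd_sq_norms:
  assumes "has_gradient F Fu Fv" "l \<in> {1..N}"
  shows "pd l (\<lambda>y. F (sqn N y, sqnm1 N lam y)) y =
           2 * y l * (Fu (sqn N y, sqnm1 N lam y) + Fv (sqn N y, sqnm1 N lam y) / lam l)"
  by (rule pd_eqI) (rule DERIV_sq_norms_upd[OF assms])

lemma pd_pd_sq_norms:
  fixes y :: pt and lam :: "nat \<Rightarrow> real"
  assumes F: "has_gradient F Fu Fv" and Fu: "has_gradient Fu Fuu Fuv" and Fv: "has_gradient Fv Fuv Fvv"
    and l: "l \<in> {1..N}"
  defines "P \<equiv> (sqn N y, sqnm1 N lam y)"
  shows "pd l (pd l (\<lambda>y. F (sqn N y, sqnm1 N lam y))) y =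
           2 * (Fu P + Fv P / lam l) + 4 * (y l)\<^sup>2 * (Fuu P + 2 * Fuv P / lam l + Fvv P / (lam l)\<^sup>2)"
proof (rule pd_eqI)
  have "((\<lambda>t. 2 * t * (Fu (sqn N (y(l := t)), sqnm1 N lam (y(l := t)))
                      + Fv (sqn N (y(l := t)), sqnm1 N lam (y(l := t))) / lam l)) has_real_derivative
          2 * (Fu P + Fv P / lam l)
          + 2 * y l * (2 * y l * (Fuu P + Fuv P / lam l) + 2 * y l * (Fuv P + Fvv P / lam l) / lam l))
          (at (y l))"
    unfolding P_def
    using DERIV_mult[OF DERIV_cmult_Id[of 2]
        DERIV_add[OF DERIV_sq_norms_upd[OF Fu l, of y lam]
          DERIV_cdivide[OF DERIV_sq_norms_upd[OF Fv l, of y lam], of "lam l"]]]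
    by (rule DERIV_cong) (simp add: algebra_simps)
  then show "((\<lambda>t. pd l (\<lambda>y. F (sqn N y, sqnm1 N lam y)) (y(l := t))) has_real_derivative
          2 * (Fu P + Fv P / lam l) + 4 * (y l)\<^sup>2 * (Fuu P + 2 * Fuv P / lam l + Fvv P / (lam l)\<^sup>2))
          (at (y l))"
    by (simp add: pd_sq_norms[OF F l] power2_eq_square algebra_simps add_divide_distrib)
qed

lemma Ltil_sq_norms:
  fixes x :: pt and lam :: "nat \<Rightarrow> real"
  assumes F: "has_gradient F Fu Fv" and Fu: "has_gradient Fu Fuu Fuv" and Fv: "has_gradient Fv Fuv Fvv"
    and lam_nz: "\<forall>l\<in>{1..N}. lam l \<noteq> 0"
  defines "P \<equiv> (sqn N x, sqnm1 N lam x)"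
  shows "Ltil N lam a delta (\<lambda>y. F (sqn N y, sqnm1 N lam y)) x =
           2 * a * ((\<Sum>l\<in>{1..N}. lam l * (1 + delta l) * (x l)\<^sup>2) * Fuu P
                   + 2 * (\<Sum>l\<in>{1..N}. (1 + delta l) * (x l)\<^sup>2) * Fuv P
                   + (\<Sum>l\<in>{1..N}. 1 / lam l * (1 + delta l) * (x l)\<^sup>2) * Fvv P)
         + (a * (\<Sum>l\<in>{1..N}. lam l * (1 + delta l)) - 2 * (\<Sum>l\<in>{1..N}. lam l * (x l)\<^sup>2)) * Fu P
         + (a * (\<Sum>l\<in>{1..N}. 1 + delta l) - 2 * (\<Sum>l\<in>{1..N}. (x l)\<^sup>2)) * Fv P"
proof -
  have "Ltil N lam a delta (\<lambda>y. F (sqn N y, sqnm1 N lam y)) x =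
        (\<Sum>l\<in>{1..N}. 2 * a * (lam l * (1 + delta l) * (x l)\<^sup>2 * Fuu P
                                + 2 * ((1 + delta l) * (x l)\<^sup>2) * Fuv P
                                + 1 / lam l * (1 + delta l) * (x l)\<^sup>2 * Fvv P)
                    + (a * (lam l * (1 + delta l)) - 2 * (lam l * (x l)\<^sup>2)) * Fu P
                    + (a * (1 + delta l) - 2 * (x l)\<^sup>2) * Fv P)"
    unfolding Ltil_def using lam_nz
    by (intro sum.cong refl)
       (simp add: pd_pd_sq_norms[OF F Fu Fv] pd_sq_norms[OF F] P_def field_simps power2_eq_square)
  also have "\<dots> = 2 * a * ((\<Sum>l\<in>{1..N}. lam l * (1 + delta l) * (x l)\<^sup>2) * Fuu P
                   + 2 * (\<Sum>l\<in>{1..N}. (1 + delta l) * (x l)\<^sup>2) * Fuv P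
                   + (\<Sum>l\<in>{1..N}. 1 / lam l * (1 + delta l) * (x l)\<^sup>2) * Fvv P)
         + (a * (\<Sum>l\<in>{1..N}. lam l * (1 + delta l)) - 2 * (\<Sum>l\<in>{1..N}. lam l * (x l)\<^sup>2)) * Fu P
         + (a * (\<Sum>l\<in>{1..N}. 1 + delta l) - 2 * (\<Sum>l\<in>{1..N}. (x l)\<^sup>2)) * Fv P"
    by (simp add: sum.distrib sum_subtractf sum_distrib_left sum_distrib_right algebra_simps)
  finally show ?thesis .
qed

definition tangent_sq_norms :: "nat \<Rightarrow> (nat \<Rightarrow> real) \<Rightarrow> vfield \<Rightarrow> bool" where
  "tangent_sq_norms N lam Z \<longleftrightarrow>
     (\<forall>y. (\<Sum>c\<in>{1..N}. y c * Z c y) = 0 \<and> (\<Sum>c\<in>{1..N}. y c * Z c y / lam c) = 0)"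

lemma vf_apply_sq_norms:
  assumes "has_gradient F Fu Fv"
  shows "vf_apply N Z (\<lambda>y. F (sqn N y, sqnm1 N lam y)) y =
           2 * Fu (sqn N y, sqnm1 N lam y) * (\<Sum>c\<in>{1..N}. y c * Z c y)
         + 2 * Fv (sqn N y, sqnm1 N lam y) * (\<Sum>c\<in>{1..N}. y c * Z c y / lam c)"
  unfolding vf_apply_def sum_distrib_left sum.distrib[symmetric]
  by (intro sum.cong refl) (simp add: pd_sq_norms[OF assms] algebra_simps)

lemma vf_apply_sq_norms_eq_0:
  "has_gradient F Fu Fv \<Longrightarrow> tangent_sq_norms N lam Z \<Longrightarrow>
     vf_apply N Z (\<lambda>y. F (sqn N y, sqnm1 N lam y)) = (\<lambda>_. 0)"
  by (simp add: vf_apply_sq_norms tangent_sq_norms_def fun_eq_iff)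

lemma vf_apply_0: "vf_apply N Z (\<lambda>_. 0) = (\<lambda>_. 0)"
  by (simp add: vf_apply_def pd_def fun_eq_iff)

(* Against both weights w\<^sub>c = 1 and w\<^sub>c = 1/\<lambda>\<^sub>c the three terms of T\<^sub>J contribute
  x\<^sub>kx\<^sub>lx\<^sub>m times a cyclic sum of (1/\<lambda>\<^sub>a - 1/\<lambda>\<^sub>b) w\<^sub>c, which cancels. *)

lemma tangent_sq_norms_Tfield:
  assumes "k \<in> {1..N}" "l \<in> {1..N}" "m \<in> {1..N}"
  shows "tangent_sq_norms N lam (Tfield lam k l m)"
  using assms
  by (simp add: tangent_sq_norms_def Tfield_def sum.distrib distrib_left add_divide_distrib
      if_distrib[of "\<lambda>z. _ * z"] if_distrib[of "\<lambda>z. z / _"] cong: if_cong)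
     (simp add: divide_inverse algebra_simps)

lemma tangent_sq_norms_Rfield:
  assumes "i \<in> {1..n}" "lam (2 * i - 1) = lam (2 * i)"
  shows "tangent_sq_norms (2 * n) lam (Rfield i)"
proof -
  have "2 * i - 1 \<in> {1..2 * n}" "2 * i \<in> {1..2 * n}" "2 * i - 1 \<noteq> 2 * i" using assms(1) by auto
  then show ?thesis using assms(2)
    by (simp add: tangent_sq_norms_def Rfield_def right_diff_distrib diff_divide_distrib sum_subtractf
        if_distrib[of "\<lambda>z. _ * z"] if_distrib[of "\<lambda>z. z / _"] cong: if_cong)
qed

lemma Leps_sq_norms_eq_Ltil:
  assumes F: "has_gradient F Fu Fv" and b: "tangent_sq_norms (2 * n) lam b"
    and lam_pair: "\<forall>i\<in>{1..n}. lam (2 * i - 1) = lam (2 * i)"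
  shows "Leps n lam a delta b kappa eps (\<lambda>y. F (sqn (2 * n) y, sqnm1 (2 * n) lam y)) x =
         Ltil (2 * n) lam a delta (\<lambda>y. F (sqn (2 * n) y, sqnm1 (2 * n) lam y)) x"
proof -
  let ?g = "\<lambda>y. F (sqn (2 * n) y, sqnm1 (2 * n) lam y)"
  have T: "vf_apply (2 * n) (Tfield lam k l m) ?g = (\<lambda>_. 0)" if "(k, l, m) \<in> Jset (2 * n) lam" for k l m
    using that by (intro vf_apply_sq_norms_eq_0[OF F] tangent_sq_norms_Tfield) (auto simp: Jset_def)
  have R: "vf_apply (2 * n) (Rfield i) ?g = (\<lambda>_. 0)" if "i \<in> {1..n}" for i
    using that lam_pair by (intro vf_apply_sq_norms_eq_0[OF F] tangent_sq_norms_Rfield) auto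
  have "Dop n lam ?g x = 0"
    unfolding Dop_def
    by (simp add: T R vf_apply_0 sum.neutral case_prod_beta del: atLeastAtMost_iff)
  then show ?thesis
    by (simp add: Leps_def vf_apply_sq_norms_eq_0[OF F b])
qed

lemma lam_ge_1:
  fixes lam :: "nat \<Rightarrow> real"
  assumes lam1: "lam 1 = 1"
    and lam_pair: "\<forall>i\<in>{1..n}. lam (2 * i - 1) = lam (2 * i)"
    and lam_incr: "\<forall>i\<in>{1..<n}. lam (2 * i) < lam (2 * i + 1)"
    and l: "l \<in> {1..2 * n}"
  shows "lam l \<ge> 1"
proof -
  have even_ge_1: "i \<le> n \<Longrightarrow> lam (2 * i) \<ge> 1" if "i > 0" for i
    using that
  proof (induction i rule: nat_induct_non_zero)
    case 1
    then show ?case using lam1 lam_pair by force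
  next
    case (Suc i)
    have "lam (2 * i) < lam (2 * i + 1)" using lam_incr Suc by simp
    moreover have "lam (2 * i + 1) = lam (2 * Suc i)" using lam_pair Suc.prems by force
    ultimately show ?case using Suc by fastforce
  qed
  show ?thesis
  proof (cases "even l")
    case True
    then show ?thesis using even_ge_1[of "l div 2"] l by auto
  next
    case False
    then obtain k where k: "l = 2 * k + 1" by (rule oddE)
    then have "lam l = lam (2 * (k + 1))" using lam_pair l by force
    then show ?thesis using even_ge_1[of "k + 1"] l k by auto
  qed
qed

lemma has_gradient_exp_snd:
  assumes "c \<noteq> 0"
  shows "has_gradient (\<lambda>q. d * exp (snd q / c)) (\<lambda>_. 0) (\<lambda>q. d / c * exp (snd q / c))"
  unfolding has_gradient_def
proof
  fix p :: "real \<times> real"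
  show "((\<lambda>q. d * exp (snd q / c)) has_derivative
         (\<lambda>(h, k). 0 * h + d / c * exp (snd p / c) * k)) (at p)"
    by (rule has_derivative_eq_rhs, (auto intro!: derivative_eq_intros)[1]) (auto simp: fun_eq_iff assms)
qed

lemma Ltil_exp_sqnm1:
  assumes "a \<noteq> 0" "\<forall>l\<in>{1..N}. lam l \<noteq> 0"
  shows "Ltil N lam a delta (\<lambda>y. exp (sqnm1 N lam y / (2 * a))) x =
           exp (sqnm1 N lam x / (2 * a)) / (2 * a) *
           ((\<Sum>l\<in>{1..N}. 1 / lam l * (1 + delta l) * (x l)\<^sup>2) + a * (\<Sum>l\<in>{1..N}. 1 + delta l) - 2 * sqn N x)"
proof -
  have "2 * a \<noteq> 0" using assms(1) by simp
  have E: "has_gradient (\<lambda>q. exp (snd q / (2 * a))) (\<lambda>_. 0) (\<lambda>q. exp (snd q / (2 * a)) / (2 * a))"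
    using has_gradient_exp_snd[OF \<open>2 * a \<noteq> 0\<close>, of 1] by simp
  have E': "has_gradient (\<lambda>q. exp (snd q / (2 * a)) / (2 * a)) (\<lambda>_. 0)
              (\<lambda>q. exp (snd q / (2 * a)) / (2 * a) / (2 * a))"
    using has_gradient_exp_snd[OF \<open>2 * a \<noteq> 0\<close>, of "1 / (2 * a)"] by simp
  have zero: "has_gradient (\<lambda>_. 0) (\<lambda>_. 0) (\<lambda>_. 0)"
    using has_gradient_exp_snd[OF \<open>2 * a \<noteq> 0\<close>, of 0] by simp
  show ?thesis
    using Ltil_sq_norms[OF E zero E' assms(2), of a delta x] assms(1) by (simp add: sqn_def field_simps)
qed

lemma sqnm1_le_sqn:
  assumes "\<forall>l\<in>{1..N}. 1 \<le> lam l"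
  shows "sqnm1 N lam x \<le> sqn N x"
  unfolding sqnm1_def sqn_def
proof (rule sum_mono)
  fix l assume "l \<in> {1..N}"
  with assms have "1 \<le> lam l" by blast
  then have "(x l)\<^sup>2 / lam l \<le> (x l)\<^sup>2 / 1" by (intro divide_left_mono) auto
  then show "(x l)\<^sup>2 / lam l \<le> (x l)\<^sup>2" by simp
qed

lemma Ltil_exp_sqnm1_le:
  assumes a: "a > 0" and lam_delta: "\<forall>l\<in>{1..N}. 1 \<le> lam l \<and> delta l \<le> 0"
  shows "Ltil N lam a delta (\<lambda>y. exp (sqnm1 N lam y / (2 * a))) x
           \<le> (a * real N - sqn N x) / (2 * a) * exp (sqnm1 N lam x / (2 * a))"
proof -
  have "(\<Sum>l\<in>{1..N}. 1 / lam l * (1 + delta l) * (x l)\<^sup>2) \<le> sqn N x"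
    unfolding sqn_def
  proof (rule sum_mono)
    fix l assume "l \<in> {1..N}"
    with lam_delta have "1 \<le> lam l" "delta l \<le> 0" by auto
    then have "1 / lam l * (1 + delta l) \<le> 1" by (simp add: divide_le_eq)
    then show "1 / lam l * (1 + delta l) * (x l)\<^sup>2 \<le> (x l)\<^sup>2"
      using mult_right_mono[of _ 1 "(x l)\<^sup>2"] by (simp only: zero_le_power2 mult_1_left)
  qed
  moreover have "(\<Sum>l\<in>{1..N}. 1 + delta l) \<le> real N"
    using sum_mono[of "{1..N}" "\<lambda>l. 1 + delta l" "\<lambda>_. 1"] lam_delta by simp
  then have "a * (\<Sum>l\<in>{1..N}. 1 + delta l) \<le> a * real N"
    using a by (simp add: mult_left_mono)
  ultimately have "(\<Sum>l\<in>{1..N}. 1 / lam l * (1 + delta l) * (x l)\<^sup>2) + a * (\<Sum>l\<in>{1..N}. 1 + delta l)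
                     - 2 * sqn N x \<le> a * real N - sqn N x"
    by linarith
  moreover have "\<forall>l\<in>{1..N}. lam l \<noteq> 0" using lam_delta by force
  ultimately show ?thesis
    using a by (simp add: Ltil_exp_sqnm1 mult_left_mono mult.commute[of _ "exp _"] divide_right_mono)
qed

lemma affine_times_exp_le:
  fixes a N S T :: real
  assumes "a > 0" "N \<ge> 0" "S \<ge> 0" "T \<le> S"
  shows "(a * N - S) / (2 * a) * exp (T / (2 * a)) \<le> N / 2 * exp (N / 2)"
proof (cases "S \<le> a * N")
  case True
  with assms have "exp (T / (2 * a)) \<le> exp (N / 2)" by (simp add: field_simps)
  moreover have "0 \<le> (a * N - S) / (2 * a)" "(a * N - S) / (2 * a) \<le> N / 2"
    using True assms by (simp_all add: field_simps)
  ultimately show ?thesis using assms by (intro mult_mono) auto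
next
  case False
  with assms have "(a * N - S) / (2 * a) * exp (T / (2 * a)) \<le> 0"
    by (simp add: mult_nonpos_nonneg divide_nonpos_pos)
  also have "0 \<le> N / 2 * exp (N / 2)" using assms by simp
  finally show ?thesis .
qed

theorem lemma1p2:
  fixes n :: nat and lam delta :: "nat \<Rightarrow> real" and a kappa :: real
    and b :: vfield
    and psi psi_u psi_v psi_uu psi_uv psi_vu psi_vv :: "real \<times> real \<Rightarrow> real"
  assumes n4: "n \<ge> 4"
    and lam1: "lam 1 = 1"
    and lam_pair: "\<forall>i\<in>{1..n}. lam (2 * i - 1) = lam (2 * i)"
    and lam_incr: "\<forall>i\<in>{1..<n}. lam (2 * i) < lam (2 * i + 1)"
    and a_pos: "a > 0"
    and delta_rng: "\<forall>l\<in>{1..2 * n}. -1 < delta l \<and> delta l \<le> 0"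
    and delta_pair: "\<forall>i\<in>{1..n}. delta (2 * i) = delta (2 * i - 1)"
    and b_quad: "\<exists>Q :: nat \<Rightarrow> nat \<Rightarrow> nat \<Rightarrow> real. \<forall>l\<in>{1..2 * n}. \<forall>x.
                   b l x = (\<Sum>j\<in>{1..2 * n}. \<Sum>k\<in>{1..2 * n}. Q l j k * x j * x k)"
    and b_div: "\<forall>x. (\<Sum>l\<in>{1..2 * n}. pd l (b l) x) = 0"
    and b_orth: "\<forall>x. (\<Sum>l\<in>{1..2 * n}. x l * b l x) = 0"
    and b_orth1: "\<forall>x. (\<Sum>l\<in>{1..2 * n}. x l * b l x / lam l) = 0"
    and kappa: "0 < kappa" "kappa \<le> 1"
    and psi_d: "\<forall>p. (psi has_derivative (\<lambda>(h, k). psi_u p * h + psi_v p * k)) (at p)"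
    and psi_u_d: "\<forall>p. (psi_u has_derivative (\<lambda>(h, k). psi_uu p * h + psi_uv p * k)) (at p)"
    and psi_v_d: "\<forall>p. (psi_v has_derivative (\<lambda>(h, k). psi_vu p * h + psi_vv p * k)) (at p)"
    and psi_C2: "continuous_on UNIV psi_uu" "continuous_on UNIV psi_uv"
                "continuous_on UNIV psi_vu" "continuous_on UNIV psi_vv"
  shows
    "(\<forall>eps>0. \<forall>x.
        let g = (\<lambda>y. psi (sqn (2 * n) y, sqnm1 (2 * n) lam y));
            p = (sqn (2 * n) x, sqnm1 (2 * n) lam x)
        in Leps n lam a delta b kappa eps g x = Ltil (2 * n) lam a delta g x
         \<and> Ltil (2 * n) lam a delta g x =
             2 * a * ((\<Sum>l\<in>{1..2 * n}. lam l * (1 + delta l) * (x l)\<^sup>2) * psi_uu p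
                     + 2 * (\<Sum>l\<in>{1..2 * n}. (1 + delta l) * (x l)\<^sup>2) * psi_uv p
                     + (\<Sum>l\<in>{1..2 * n}. 1 / lam l * (1 + delta l) * (x l)\<^sup>2) * psi_vv p)
           + (a * (\<Sum>l\<in>{1..2 * n}. lam l * (1 + delta l)) - 2 * (\<Sum>l\<in>{1..2 * n}. lam l * (x l)\<^sup>2)) * psi_u p
           + (a * (\<Sum>l\<in>{1..2 * n}. 1 + delta l) - 2 * (\<Sum>l\<in>{1..2 * n}. (x l)\<^sup>2)) * psi_v p)
     \<and> (\<forall>eps>0. \<forall>x.
        let g0 = (\<lambda>y. exp (sqnm1 (2 * n) lam y / (2 * a)))
        in Leps n lam a delta b kappa eps g0 x
             \<le> (a * real (2 * n) - sqn (2 * n) x) / (2 * a) * exp (sqnm1 (2 * n) lam x / (2 * a))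
         \<and> (a * real (2 * n) - sqn (2 * n) x) / (2 * a) * exp (sqnm1 (2 * n) lam x / (2 * a))
             \<le> real (2 * n) / 2 * exp (real (2 * n) / 2))"
proof -
  have lam_ge: "\<forall>l\<in>{1..2 * n}. 1 \<le> lam l" using lam_ge_1[OF lam1 lam_pair lam_incr] by blast
  then have lam_nz: "\<forall>l\<in>{1..2 * n}. lam l \<noteq> 0" by force
  have b: "tangent_sq_norms (2 * n) lam b" using b_orth b_orth1 unfolding tangent_sq_norms_def by blast
  have psi: "has_gradient psi psi_u psi_v" and psi_u: "has_gradient psi_u psi_uu psi_uv"
    and psi_v: "has_gradient psi_v psi_vu psi_vv"
    using psi_d psi_u_d psi_v_d unfolding has_gradient_def by blast+
  moreover have "psi_uv = psi_vu" using has_gradient_mixed_partials_eq[OF psi psi_u psi_v psi_C2(2,3)] .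
  ultimately have psi_v': "has_gradient psi_v psi_uv psi_vv" by simp
  have g0: "has_gradient (\<lambda>q. 1 * exp (snd q / (2 * a))) (\<lambda>_. 0) (\<lambda>q. 1 / (2 * a) * exp (snd q / (2 * a)))"
    using a_pos by (intro has_gradient_exp_snd) simp
  have lam_delta: "\<forall>l\<in>{1..2 * n}. 1 \<le> lam l \<and> delta l \<le> 0" using lam_ge delta_rng by blast
  have "Leps n lam a delta b kappa eps (\<lambda>y. exp (sqnm1 (2 * n) lam y / (2 * a))) x
          \<le> (a * real (2 * n) - sqn (2 * n) x) / (2 * a) * exp (sqnm1 (2 * n) lam x / (2 * a))" for eps x
    using Leps_sq_norms_eq_Ltil[OF g0 b lam_pair] Ltil_exp_sqnm1_le[OF a_pos lam_delta] by simp
  moreover have "(a * real (2 * n) - sqn (2 * n) x) / (2 * a) * exp (sqnm1 (2 * n) lam x / (2 * a))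
                   \<le> real (2 * n) / 2 * exp (real (2 * n) / 2)" for x
    using lam_ge by (intro affine_times_exp_le[OF a_pos] sqnm1_le_sqn) (auto simp: sqn_def sum_nonneg)
  ultimately show ?thesis
    using Leps_sq_norms_eq_Ltil[OF psi b lam_pair] Ltil_sq_norms[OF psi psi_u psi_v' lam_nz]
    unfolding Let_def by simp
qed

end
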